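(* Let $\mathcal B_1$ be an arbitrary set of mini-batches and let $f\in\mathcal F$ be a file with $(f,f)\in\mathcal B_1$. If $$n(f)\Bigl(l(f)+\sum_{b\in\mathcal B_1,\ l(b)<l(f)}s(b)\Bigr) < s(f)\Bigl(\sum_{f'\in\mathcal F,\ l(f')<l(f)}n(f')+\sum_{f'\in\mathcal F\setminus\mathcal F(\mathcal B_1),\ l(f')>l(f)}n(f')\Bigr),$$ then $v(\mathcal B_1\setminus\{(f,f)\})<v(\mathcal B_1)$.
   Context: A single-track tape stores a sequence of files $\mathcal F=(f_1,\dots,f_n)$ laid out contiguously from left to right: file $f$ occupies blocks $l(f),\dots,r(f)$, has size $s(f)=r(f)-l(f)+1$, $l(f_1)=1$, $l(f_{i+1})=r(f_i)+1$, and $m=\sum_f s(f)$. The tape moves one block per time step; at time $0$ the head is at position $m$. A file is read when the head traverses it rightwards from $l(f)$ to $r(f)$. $\mathcal R$ is a finite set of requests, all released at time $0$, each associated with a file; $n(f)$ is the number of requests for $f$. A request's response time is the time at which the head starts a rightward reading traversal of its file (all pending requests of a file are serviced simultaneously). A mini-batch is a pair $b=(f,f')$ of files with $l(f)\le l(f')$; $l(b)=l(f)$, $r(b)=r(f')$, $s(b)=r(b)-l(b)+1$, $\mathcal F(b)$ is the set of files $g$ with $l(b)\le l(g)$, $r(g)\le r(b)$, and $\mathcal F(\mathcal B_1)=\bigcup_{b\in\mathcal B_1}\mathcal F(b)$. Given a set $\mathcal B_1$ of mini-batches, its schedule is: Phase 1, the head moves leftwards from $m$ to $1$, and upon reaching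 $l(b)$ for $b\in\mathcal B_1$ executes $b$ (moves rightwards to $r(b)$, reading all files of $\mathcal F(b)$, and returns to $l(b)$), then continues leftwards; Phase 2, the head moves rightwards from $1$ to $m$ reading every file. $v(\mathcal B_1)$ is the total response time of this schedule. *)

theory Defs
  imports Main
begin

text \<open>Files are indexed 0,...,nf-1 (left to right); s i is the size of file i.
  Head position p means the head is at the left end of block p, so reading a
  block takes one time step and reading file f takes s(f) steps.\<close>

definition lpos :: "(nat \<Rightarrow> nat) \<Rightarrow> nat \<Rightarrow> nat" where
  "lpos s i = 1 + (\<Sum>j<i. s j)"

definition rpos :: "(nat \<Rightarrow> nat) \<Rightarrow> nat \<Rightarrow> nat" where
  "rpos s i = lpos s i + s i - 1"

definition tape_len :: "(nat \<Rightarrow> nat) \<Rightarrow> nat \<Rightarrow> nat" where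
  "tape_len s nf = (\<Sum>j<nf. s j)"

definition is_minibatch :: "(nat \<Rightarrow> nat) \<Rightarrow> nat \<Rightarrow> nat \<times> nat \<Rightarrow> bool" where
  "is_minibatch s nf b \<longleftrightarrow> fst b < nf \<and> snd b < nf \<and> lpos s (fst b) \<le> lpos s (snd b)"

definition bl :: "(nat \<Rightarrow> nat) \<Rightarrow> nat \<times> nat \<Rightarrow> nat" where
  "bl s b = lpos s (fst b)"

definition br :: "(nat \<Rightarrow> nat) \<Rightarrow> nat \<times> nat \<Rightarrow> nat" where
  "br s b = rpos s (snd b)"

definition bsize :: "(nat \<Rightarrow> nat) \<Rightarrow> nat \<times> nat \<Rightarrow> nat" where
  "bsize s b = br s b - bl s b + 1"

definition files_of :: "(nat \<Rightarrow> nat) \<Rightarrow> nat \<Rightarrow> nat \<times> nat \<Rightarrow> nat set" where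
  "files_of s nf b = {g. g < nf \<and> bl s b \<le> lpos s g \<and> rpos s g \<le> br s b}"

definition files_of_set :: "(nat \<Rightarrow> nat) \<Rightarrow> nat \<Rightarrow> (nat \<times> nat) set \<Rightarrow> nat set" where
  "files_of_set s nf B = (\<Union>b\<in>B. files_of s nf b)"

text \<open>Execution of a mini-batch with left end p and right end R: the head moves
  rightwards from p through block R (ending at p..R+1) and returns to p.
  The list gives the head positions at the successive time steps after p.\<close>

definition excursion :: "nat \<Rightarrow> nat \<Rightarrow> nat list" where
  "excursion p R = [Suc p..<R + 2] @ rev [p..<Suc R]"

text \<open>Head trajectory: entry t is the head position at time t.
  Phase 1: from m down to 1, executing at each position p the mini-batches
  with left end p (in increasing order of right end).
  Phase 2: from 1 rightwards reading every file.\<close>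

definition trajectory :: "(nat \<Rightarrow> nat) \<Rightarrow> nat \<Rightarrow> (nat \<times> nat) set \<Rightarrow> nat list" where
  "trajectory s nf B =
     concat (map (\<lambda>p. p # concat (map (excursion p)
                   (sorted_list_of_set (br s ` {b \<in> B. bl s b = p}))))
                 (rev [1..<Suc (tape_len s nf)]))
     @ [2..<tape_len s nf + 2]"

definition reads_at :: "(nat \<Rightarrow> nat) \<Rightarrow> nat list \<Rightarrow> nat \<Rightarrow> nat \<Rightarrow> bool" where
  "reads_at s tr f t \<longleftrightarrow> (\<forall>k\<le>s f. t + k < length tr \<and> tr ! (t + k) = lpos s f + k)"

definition resp :: "(nat \<Rightarrow> nat) \<Rightarrow> nat \<Rightarrow> (nat \<times> nat) set \<Rightarrow> nat \<Rightarrow> nat" where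
  "resp s nf B f = (LEAST t. reads_at s (trajectory s nf B) f t)"

definition nreq :: "'r set \<Rightarrow> ('r \<Rightarrow> nat) \<Rightarrow> nat \<Rightarrow> nat" where
  "nreq R fo f = card {r \<in> R. fo r = f}"

definition v :: "(nat \<Rightarrow> nat) \<Rightarrow> nat \<Rightarrow> 'r set \<Rightarrow> ('r \<Rightarrow> nat) \<Rightarrow> (nat \<times> nat) set \<Rightarrow> nat" where
  "v s nf R fo B = (\<Sum>r\<in>R. resp s nf B (fo r))"

end

theory Submission
  imports Defs
begin

text \<open>Removing the singleton batch \<open>(f, f)\<close> deletes one excursion \<open>E\<close> of length \<open>2 s(f)\<close> from
  the head trajectory: it is \<open>A @ E @ Z\<close> for \<open>B\<close> and \<open>A @ Z\<close> for \<open>B - {(f, f)}\<close>, where \<open>A\<close>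
  consists of the excursions of the batches starting right of \<open>f\<close>. The head turns around at both
  ends of \<open>E\<close>, so a reading traversal of a file \<open>g \<noteq> f\<close> lies either inside \<open>A\<close>, and then \<open>g\<close>
  belongs to a batch starting right of \<open>f\<close>, or inside \<open>Z\<close>, where it happens \<open>2 s(f)\<close> steps
  earlier once \<open>E\<close> is gone. So no request for \<open>g \<noteq> f\<close> is delayed, and every request for a file
  left of \<open>f\<close> or for an unbatched file right of \<open>f\<close> gains \<open>2 s(f)\<close>. Summing
  over the requests, the hypothesis makes the total gain exceed the total loss.\<close>

section \<open>Ascending runs of head positions\<close>

definition ascending_run :: "nat list \<Rightarrow> nat \<Rightarrow> nat \<Rightarrow> nat \<Rightarrow> bool" where
  "ascending_run xs a n t \<longleftrightarrow> (\<forall>k\<le>n. t + k < length xs \<and> xs ! (t + k) = a + k)"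

lemma reads_at_iff_ascending_run: "reads_at s tr g t \<longleftrightarrow> ascending_run tr (lpos s g) (s g) t"
  by (simp add: reads_at_def ascending_run_def)

lemma ascending_run_nth: "ascending_run xs a n t \<Longrightarrow> xs ! t = a"
  unfolding ascending_run_def by (metis add_0_right le0)

lemma ascending_run_append_left: "ascending_run xs a n t \<Longrightarrow> ascending_run (xs @ ys) a n t"
  unfolding ascending_run_def by (auto simp: nth_append)

lemma ascending_run_append_right:
  "ascending_run ys a n t \<Longrightarrow> ascending_run (xs @ ys) a n (length xs + t)"
  unfolding ascending_run_def by (auto simp: nth_append)

lemma ascending_run_upt: "q \<le> a \<Longrightarrow> a + n < r \<Longrightarrow> ascending_run [q..<r] a n (a - q)"
  unfolding ascending_run_def by auto

lemma ascending_run_append_cases: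
  assumes run: "ascending_run (xs @ ys) a n t" and "0 < n"
    and boundary: "xs \<noteq> [] \<Longrightarrow> ys \<noteq> [] \<Longrightarrow> hd ys \<noteq> Suc (last xs)"
  shows "t + n < length xs \<and> ascending_run xs a n t
       \<or> length xs \<le> t \<and> ascending_run ys a n (t - length xs)"
proof -
  have in_range: "t + k < length (xs @ ys)" and entry: "(xs @ ys) ! (t + k) = a + k" if "k \<le> n" for k
    using run that unfolding ascending_run_def by auto
  consider "t + n < length xs" | "length xs \<le> t" | "t < length xs" "length xs \<le> t + n"
    by linarith
  then show ?thesis
  proof cases
    case 1
    then show ?thesis using run unfolding ascending_run_def by (auto simp: nth_append)
  next
    case 2
    then show ?thesis using run unfolding ascending_run_def by (auto simp: nth_append)
  next
    case 3
    define k where "k = length xs - Suc t"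
    have k: "Suc k \<le> n" "Suc (t + k) = length xs"
      using 3 by (auto simp: k_def)
    have "xs \<noteq> []" "ys \<noteq> []"
      using k in_range[OF k(1)] by auto
    have "last xs = xs ! (t + k)"
      using k(2) \<open>xs \<noteq> []\<close> by (metis last_conv_nth diff_Suc_1)
    then have "last xs = a + k"
      using entry[of k] k by (simp add: nth_append)
    moreover have "hd ys = a + Suc k"
      using entry[OF k(1)] k \<open>ys \<noteq> []\<close> by (simp add: hd_conv_nth nth_append)
    ultimately show ?thesis
      using boundary \<open>xs \<noteq> []\<close> \<open>ys \<noteq> []\<close> by simp
  qed
qed

definition every_run :: "(nat \<Rightarrow> nat \<Rightarrow> bool) \<Rightarrow> nat list \<Rightarrow> bool" where
  "every_run P xs \<longleftrightarrow> (\<forall>a n t. 0 < n \<longrightarrow> ascending_run xs a n t \<longrightarrow> P a n)"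

lemma every_runD: "every_run P xs \<Longrightarrow> ascending_run xs a n t \<Longrightarrow> 0 < n \<Longrightarrow> P a n"
  unfolding every_run_def by blast

lemma every_run_mono: "every_run P xs \<Longrightarrow> (\<And>a n. P a n \<Longrightarrow> Q a n) \<Longrightarrow> every_run Q xs"
  unfolding every_run_def by blast

lemma every_run_singleton: "every_run P [x]"
  unfolding every_run_def ascending_run_def by (metis Suc_leI length_Cons list.size(3) not_add_less2)

lemma every_run_upt: "(\<And>a n. q \<le> a \<Longrightarrow> a + n < r \<Longrightarrow> P a n) \<Longrightarrow> every_run P [q..<r]"
  unfolding every_run_def ascending_run_def
proof (intro allI impI)
  fix a n t assume P: "\<And>a n. q \<le> a \<Longrightarrow> a + n < r \<Longrightarrow> P a n"
    and run: "\<forall>k\<le>n. t + k < length [q..<r] \<and> [q..<r] ! (t + k) = a + k"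
  from run[rule_format, of 0] run[rule_format, of n] show "P a n"
    by (intro P) auto
qed

lemma every_run_rev_upt: "every_run P (rev [q..<r])"
  unfolding every_run_def ascending_run_def
proof (intro allI impI)
  fix a n t assume "0 < n" and run: "\<forall>k\<le>n. t + k < length (rev [q..<r]) \<and> rev [q..<r] ! (t + k) = a + k"
  from run[rule_format, of 0] run[rule_format, of 1] \<open>0 < n\<close> have False
    by (auto simp: rev_nth)
  then show "P a n" ..
qed

lemma every_run_append:
  assumes "every_run P xs" "every_run P ys"
    and "xs \<noteq> [] \<Longrightarrow> ys \<noteq> [] \<Longrightarrow> hd ys \<noteq> Suc (last xs)"
  shows "every_run P (xs @ ys)"
  unfolding every_run_def
proof (intro allI impI)
  fix a n t assume "0 < n" "ascending_run (xs @ ys) a n t"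
  from ascending_run_append_cases[OF this(2,1) assms(3)] assms(1,2) \<open>0 < n\<close> show "P a n"
    by (auto dest: every_runD)
qed

lemma every_run_concat:
  assumes "\<forall>xs\<in>set xss. xs \<noteq> [] \<and> every_run P xs"
    and "successively (\<lambda>xs ys. hd ys \<noteq> Suc (last xs)) xss"
  shows "every_run P (concat xss)"
  using assms
proof (induction xss)
  case Nil
  then show ?case by (auto simp: every_run_def ascending_run_def dest: spec[of _ 0])
next
  case (Cons xs xss)
  have boundary: "hd (concat xss) \<noteq> Suc (last xs)" if "concat xss \<noteq> []"
  proof -
    from that obtain ys yss where "xss = ys # yss" by (cases xss) auto
    then show ?thesis using Cons.prems by (auto simp: successively_Cons)
  qed
  have "successively (\<lambda>xs ys. hd ys \<noteq> Suc (last xs)) xss"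
    using Cons.prems(2) by (cases xss) auto
  then have "every_run P (concat xss)"
    using Cons by simp
  then show ?case
    using Cons.prems(1) boundary by (simp add: every_run_append del: concat_eq_Nil_conv)
qed

lemma successively_if_pairwise:
  "(\<And>x y. x \<in> set xs \<Longrightarrow> y \<in> set xs \<Longrightarrow> P x y) \<Longrightarrow> successively P xs"
  by (induction xs rule: induct_list012) auto

section \<open>Tape geometry and the leftward sweep\<close>

lemma lpos_Suc: "lpos s (Suc i) = lpos s i + s i"
  by (simp add: lpos_def)

lemma lpos_pos: "0 < lpos s i"
  by (simp add: lpos_def)

lemma lpos_mono: "i \<le> j \<Longrightarrow> lpos s i \<le> lpos s j"
  unfolding lpos_def by (simp add: sum_mono2)

lemma lpos_add_le: "i < j \<Longrightarrow> lpos s i + s i \<le> lpos s j"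
  using lpos_mono[of "Suc i" j s] by (simp add: lpos_Suc)

lemma lpos_add_le_tape_len: "i < nf \<Longrightarrow> lpos s i + s i \<le> Suc (tape_len s nf)"
  using lpos_add_le[of i nf s] by (simp add: lpos_def tape_len_def)

lemma lpos_strict_mono: "i < j \<Longrightarrow> 0 < s i \<Longrightarrow> lpos s i < lpos s j"
  using lpos_add_le[of i j s] by simp

lemma rpos_strict_mono: "i < j \<Longrightarrow> 0 < s j \<Longrightarrow> rpos s i < rpos s j"
  using lpos_add_le[of i j s] lpos_pos[of s i] by (simp add: rpos_def)

lemma nested_file_eq:
  assumes "0 < s g" "lpos s f \<le> lpos s g" "lpos s g + s g \<le> lpos s f + s f"
  shows "g = f"
  using lpos_add_le[of g f s] lpos_add_le[of f g s] assms by (cases g f rule: linorder_cases) auto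

lemma minibatch_bl_le_br: "\<forall>i<nf. 0 < s i \<Longrightarrow> is_minibatch s nf b \<Longrightarrow> bl s b \<le> br s b"
  by (cases b) (auto simp: is_minibatch_def bl_def br_def rpos_def)

lemma finite_minibatches: "\<forall>b\<in>B. is_minibatch s nf b \<Longrightarrow> finite B"
  by (rule finite_subset[of _ "{..<nf} \<times> {..<nf}"]) (auto simp: is_minibatch_def)

lemma set_excursion: "x \<in> set (excursion q R) \<Longrightarrow> q \<le> x"
  by (auto simp: excursion_def)

lemma length_excursion: "length (excursion q R) = 2 * (Suc R - q)"
  by (simp add: excursion_def) arith

lemma excursion_eq_Nil: "R < q \<Longrightarrow> excursion q R = []"
  by (simp add: excursion_def)

lemma last_excursion: "q \<le> R \<Longrightarrow> last (excursion q R) = q"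
  by (simp add: excursion_def last_rev)

definition open_excursion :: "nat \<Rightarrow> nat \<Rightarrow> nat list" where
  "open_excursion q R = [q..<R + 2] @ rev [Suc q..<Suc R]"

lemma Cons_excursion: "q \<le> R \<Longrightarrow> q # excursion q R @ xs = open_excursion q R @ q # xs"
  by (simp add: excursion_def open_excursion_def upt_conv_Cons del: upt_Suc)

lemma Cons_concat_excursions:
  "\<forall>R\<in>set Rs. q \<le> R \<Longrightarrow> q # concat (map (excursion q) Rs) = concat (map (open_excursion q) Rs) @ [q]"
  by (induction Rs) (simp_all add: Cons_excursion)

lemma hd_open_excursion: "q \<le> R \<Longrightarrow> hd (open_excursion q R) = q"
  by (simp add: open_excursion_def upt_conv_Cons del: upt_Suc)

lemma last_open_excursion: "q \<le> R \<Longrightarrow> last (open_excursion q R) = Suc q"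
  by (cases "q = R") (simp_all add: open_excursion_def last_rev upt_conv_Cons del: upt_Suc)

lemma length_open_excursion: "q \<le> R \<Longrightarrow> length (open_excursion q R) = 2 * (Suc R - q)"
  by (simp add: open_excursion_def) arith

lemma every_run_open_excursion:
  assumes "q \<le> R"
  shows "every_run (\<lambda>a n. q \<le> a \<and> a + n \<le> Suc R) (open_excursion q R)"
  unfolding open_excursion_def
proof (rule every_run_append)
  show "every_run (\<lambda>a n. q \<le> a \<and> a + n \<le> Suc R) [q..<R + 2]"
    by (rule every_run_upt) simp
  show "hd (rev [Suc q..<Suc R]) \<noteq> Suc (last [q..<R + 2])" if "rev [Suc q..<Suc R] \<noteq> []"
    using assms that by (simp add: hd_rev del: upt_Suc)
qed (rule every_run_rev_upt)

definition batch_ends :: "(nat \<Rightarrow> nat) \<Rightarrow> (nat \<times> nat) set \<Rightarrow> nat \<Rightarrow> nat list" where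
  "batch_ends s B q = sorted_list_of_set (br s ` {b \<in> B. bl s b = q})"

definition sweep_block :: "(nat \<Rightarrow> nat) \<Rightarrow> (nat \<times> nat) set \<Rightarrow> nat \<Rightarrow> nat list" where
  "sweep_block s B q = q # concat (map (excursion q) (batch_ends s B q))"

definition sweep :: "(nat \<Rightarrow> nat) \<Rightarrow> nat \<Rightarrow> (nat \<times> nat) set \<Rightarrow> nat list" where
  "sweep s nf B = concat (map (sweep_block s B) (rev [1..<Suc (tape_len s nf)]))"

definition sweep_above :: "(nat \<Rightarrow> nat) \<Rightarrow> nat \<Rightarrow> (nat \<times> nat) set \<Rightarrow> nat \<Rightarrow> nat list" where
  "sweep_above s nf B p = concat (map (sweep_block s B) (rev [Suc p..<Suc (tape_len s nf)]))"

definition sweep_below :: "(nat \<Rightarrow> nat) \<Rightarrow> (nat \<times> nat) set \<Rightarrow> nat \<Rightarrow> nat list" where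
  "sweep_below s B p = concat (map (sweep_block s B) (rev [1..<p]))"

lemma trajectory_eq_sweep: "trajectory s nf B = sweep s nf B @ [2..<tape_len s nf + 2]"
  unfolding trajectory_def sweep_def sweep_block_def[abs_def] batch_ends_def ..

lemma sweep_split:
  assumes "1 \<le> p" "p \<le> tape_len s nf"
  shows "sweep s nf B = sweep_above s nf B p @ sweep_block s B p @ sweep_below s B p"
proof -
  have "[1..<Suc (tape_len s nf)] = [1..<p] @ p # [Suc p..<Suc (tape_len s nf)]"
    using assms upt_add_eq_append[of 1 p "Suc (tape_len s nf) - p"] upt_conv_Cons[of p "Suc (tape_len s nf)"]
    by simp
  then show ?thesis
    by (simp add: sweep_def sweep_above_def sweep_below_def)
qed

lemma sweep_block_remove: "q \<noteq> bl s b \<Longrightarrow> sweep_block s (B - {b}) q = sweep_block s B q"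
proof -
  assume "q \<noteq> bl s b"
  then have "{c \<in> B - {b}. bl s c = q} = {c \<in> B. bl s c = q}" by auto
  then show ?thesis by (simp add: sweep_block_def batch_ends_def)
qed

lemma sweep_above_remove: "sweep_above s nf (B - {b}) (bl s b) = sweep_above s nf B (bl s b)"
  unfolding sweep_above_def by (intro arg_cong[where f = concat] map_cong refl sweep_block_remove) auto

lemma sweep_below_remove: "sweep_below s (B - {b}) (bl s b) = sweep_below s B (bl s b)"
  unfolding sweep_below_def by (intro arg_cong[where f = concat] map_cong refl sweep_block_remove) auto

lemma hd_sweep_block: "hd (sweep_block s B q) = q"
  by (simp add: sweep_block_def)

lemma last_Cons_concat_excursions: "last (q # concat (map (excursion q) Rs)) = q"
proof (induction Rs rule: rev_induct)
  case Nil
  then show ?case by simp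
next
  case (snoc R Rs)
  show ?case
  proof (cases "q \<le> R")
    case True
    then have "excursion q R \<noteq> []" by (simp add: excursion_def)
    with True show ?thesis
      using last_appendR[of "excursion q R" "q # concat (map (excursion q) Rs)"]
      by (simp add: last_excursion)
  next
    case False
    then have "concat (map (excursion q) (Rs @ [R])) = concat (map (excursion q) Rs)"
      by (simp add: excursion_eq_Nil)
    with snoc.IH show ?thesis by (simp only:)
  qed
qed

lemma last_sweep_block: "last (sweep_block s B q) = q"
  by (simp only: sweep_block_def last_Cons_concat_excursions)

lemma set_sweep_block: "x \<in> set (sweep_block s B q) \<Longrightarrow> q \<le> x"
  by (auto simp: sweep_block_def dest: set_excursion)

lemma set_sweep_above: "x \<in> set (sweep_above s nf B p) \<Longrightarrow> p < x"
  by (fastforce simp: sweep_above_def dest: set_sweep_block)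

lemma every_run_Cons_concat_excursions:
  assumes "\<And>R. R \<in> set Rs \<Longrightarrow> q \<le> R"
    and "\<And>R a n. R \<in> set Rs \<Longrightarrow> q \<le> a \<Longrightarrow> a + n \<le> Suc R \<Longrightarrow> P a n"
  shows "every_run P (q # concat (map (excursion q) Rs))"
proof -
  let ?xss = "map (open_excursion q) Rs @ [[q]]"
  have "q # concat (map (excursion q) Rs) = concat ?xss"
    using assms(1) by (simp add: Cons_concat_excursions)
  moreover have "every_run P (concat ?xss)"
  proof (rule every_run_concat)
    show "\<forall>xs\<in>set ?xss. xs \<noteq> [] \<and> every_run P xs"
    proof
      fix xs assume "xs \<in> set ?xss"
      then consider (excursion) R where "R \<in> set Rs" "xs = open_excursion q R" | (return) "xs = [q]"
        by auto
      then show "xs \<noteq> [] \<and> every_run P xs"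
      proof cases
        case excursion
        then have "q \<le> R"
          using assms(1) by blast
        from every_run_open_excursion[OF this] have "every_run P xs"
          unfolding excursion(2) by (rule every_run_mono) (use assms(2)[OF excursion(1)] in blast)
        with \<open>q \<le> R\<close> show ?thesis
          by (simp add: excursion(2) open_excursion_def)
      qed (simp add: every_run_singleton)
    qed
    have hd_last: "hd xs = q \<and> q \<le> last xs" if "xs \<in> set ?xss" for xs
      using that assms(1) by (auto simp: hd_open_excursion last_open_excursion)
    show "successively (\<lambda>xs ys. hd ys \<noteq> Suc (last xs)) ?xss"
    proof (rule successively_if_pairwise)
      fix xs ys assume "xs \<in> set ?xss" "ys \<in> set ?xss"
      with hd_last[of xs] hd_last[of ys] show "hd ys \<noteq> Suc (last xs)"
        by simp
    qed
  qed
  ultimately show ?thesis by simp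
qed

lemma every_run_sweep_block:
  assumes "finite B" "\<forall>b\<in>B. bl s b \<le> br s b"
  shows "every_run (\<lambda>a n. \<exists>b\<in>B. bl s b = q \<and> q \<le> a \<and> a + n \<le> Suc (br s b)) (sweep_block s B q)"
proof -
  have "set (batch_ends s B q) = br s ` {b \<in> B. bl s b = q}"
    using assms(1) by (simp add: batch_ends_def)
  with assms(2) show ?thesis
    unfolding sweep_block_def by (intro every_run_Cons_concat_excursions) auto
qed

lemma every_run_sweep_above:
  assumes "finite B" "\<forall>b\<in>B. bl s b \<le> br s b"
  shows "every_run (\<lambda>a n. \<exists>b\<in>B. p < bl s b \<and> bl s b \<le> a \<and> a + n \<le> Suc (br s b))
    (sweep_above s nf B p)"
proof -
  let ?P = "\<lambda>a n. \<exists>b\<in>B. p < bl s b \<and> bl s b \<le> a \<and> a + n \<le> Suc (br s b)"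
  have "every_run ?P (sweep_block s B q)" if "p < q" for q
    using every_run_sweep_block[OF assms, of q] that by (auto elim!: every_run_mono)
  then have "\<forall>xs\<in>set (map (sweep_block s B) (rev [Suc p..<Suc (tape_len s nf)])).
      xs \<noteq> [] \<and> every_run ?P xs"
    by (auto simp: sweep_block_def simp del: upt_Suc)
  moreover have "successively (\<lambda>x y. x \<noteq> Suc y) [Suc p..<Suc (tape_len s nf)]"
    by (rule successively_if_sorted_wrt[OF sorted_wrt_mono_rel[OF _ sorted_wrt_upt]]) simp
  then have "successively (\<lambda>xs ys. hd ys \<noteq> Suc (last xs))
      (map (sweep_block s B) (rev [Suc p..<Suc (tape_len s nf)]))"
    by (simp add: successively_map hd_sweep_block last_sweep_block)
  ultimately show ?thesis
    unfolding sweep_above_def by (rule every_run_concat)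
qed

lemma length_sweep_block_le:
  assumes "finite B" "\<forall>b\<in>B. bl s b \<le> br s b"
  shows "length (sweep_block s B q) \<le> Suc (2 * (\<Sum>b\<in>{b \<in> B. bl s b = q}. bsize s b))"
proof -
  let ?Bq = "{b \<in> B. bl s b = q}"
  have "length (sweep_block s B q) = Suc (\<Sum>R\<in>br s ` ?Bq. 2 * (Suc R - q))"
    using assms(1)
    by (simp add: sweep_block_def batch_ends_def length_concat length_excursion comp_def
        sum_list_distinct_conv_sum_set)
  also have "(\<Sum>R\<in>br s ` ?Bq. 2 * (Suc R - q)) \<le> (\<Sum>b\<in>?Bq. 2 * (Suc (br s b) - q))"
    using sum_image_le[of ?Bq "\<lambda>R. 2 * (Suc R - q)" "br s"] assms(1) by (simp add: comp_def)
  also have "\<dots> = (\<Sum>b\<in>?Bq. 2 * bsize s b)"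
    using assms(2) by (intro sum.cong) (auto simp: bsize_def)
  finally show ?thesis by (simp add: sum_distrib_left)
qed

lemma length_sweep_below_le:
  assumes "finite B" "\<forall>b\<in>B. bl s b \<le> br s b"
  shows "length (sweep_below s B p) \<le> p - 1 + 2 * (\<Sum>b\<in>{b \<in> B. bl s b < p}. bsize s b)"
proof -
  have "length (sweep_below s B p) = (\<Sum>q\<in>{1..<p}. length (sweep_block s B q))"
    by (simp add: sweep_below_def length_concat sum_list_distinct_conv_sum_set comp_def)
  also have "\<dots> \<le> (\<Sum>q\<in>{1..<p}. Suc (2 * (\<Sum>b\<in>{b \<in> B. bl s b = q}. bsize s b)))"
    by (intro sum_mono length_sweep_block_le[OF assms])
  also have "\<dots> = p - 1 + 2 * (\<Sum>q\<in>{1..<p}. \<Sum>b\<in>{b \<in> B. bl s b = q}. bsize s b)"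
    by (simp add: sum_Suc sum_distrib_left)
  also have "(\<Sum>q\<in>{1..<p}. \<Sum>b\<in>{b \<in> B. bl s b = q}. bsize s b)
      = (\<Sum>q\<in>{1..<p}. \<Sum>b\<in>{c \<in> {b \<in> B. bl s b < p}. bl s c = q}. bsize s b)"
    by (intro sum.cong) auto
  also have "\<dots> = (\<Sum>b\<in>{b \<in> B. bl s b < p}. bsize s b)"
    using assms(1) lpos_pos by (intro sum.group) (auto simp: bl_def Suc_le_eq)
  finally show ?thesis .
qed

section \<open>Response times\<close>

lemma reads_at_phase2:
  assumes "g < nf" "0 < s g"
  shows "reads_at s (trajectory s nf B) g (length (butlast (sweep s nf B)) + (lpos s g - 1))"
proof -
  have bounds: "0 < lpos s g" "lpos s g + s g \<le> Suc (tape_len s nf)"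
    using lpos_pos lpos_add_le_tape_len[OF assms(1)] by auto
  then have "1 \<le> tape_len s nf" using assms(2) by linarith
  then have "sweep s nf B = sweep_above s nf B 1 @ sweep_block s B 1"
    using sweep_split[of 1 s nf B] by (simp add: sweep_below_def)
  then have "sweep s nf B = butlast (sweep s nf B) @ [1]"
    by (metis append_butlast_last_id append_is_Nil_conv last_appendR last_sweep_block
        list.distinct(1) sweep_block_def)
  moreover have "[1..<tape_len s nf + 2] = 1 # [2..<tape_len s nf + 2]"
    by (simp add: upt_conv_Cons numeral_2_eq_2 del: upt_Suc)
  ultimately have "trajectory s nf B = butlast (sweep s nf B) @ [1..<tape_len s nf + 2]"
    unfolding trajectory_eq_sweep by (metis append.assoc append_Cons append_Nil)
  moreover have "ascending_run [1..<tape_len s nf + 2] (lpos s g) (s g) (lpos s g - 1)"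
    using bounds by (intro ascending_run_upt) auto
  ultimately show ?thesis
    unfolding reads_at_iff_ascending_run by (metis ascending_run_append_right)
qed

lemma reads_at_resp: "g < nf \<Longrightarrow> 0 < s g \<Longrightarrow> reads_at s (trajectory s nf B) g (resp s nf B g)"
  unfolding resp_def by (rule LeastI) (rule reads_at_phase2)

lemma resp_le: "reads_at s (trajectory s nf B) g t \<Longrightarrow> resp s nf B g \<le> t"
  unfolding resp_def by (rule Least_le)

lemma sum_requests_eq_sum_files:
  assumes "finite R" "fo ` R \<subseteq> F" "finite F"
  shows "(\<Sum>r\<in>R. h (fo r)) = (\<Sum>g\<in>F. nreq R fo g * h g)"
proof -
  have "(\<Sum>r\<in>R. h (fo r)) = (\<Sum>g\<in>F. \<Sum>r\<in>{r \<in> R. fo r = g}. h (fo r))"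
    by (rule sum.group[symmetric]) (use assms in auto)
  also have "\<dots> = (\<Sum>g\<in>F. \<Sum>r\<in>{r \<in> R. fo r = g}. h g)"
    by (intro sum.cong) auto
  also have "\<dots> = (\<Sum>g\<in>F. nreq R fo g * h g)"
    by (simp add: nreq_def)
  finally show ?thesis .
qed

section \<open>Removing a singleton mini-batch\<close>

locale singleton_batch =
  fixes s :: "nat \<Rightarrow> nat" and nf :: nat and B :: "(nat \<times> nat) set" and f :: nat
  assumes sizes: "\<forall>i<nf. 0 < s i"
    and batches: "\<forall>b\<in>B. is_minibatch s nf b"
    and f_file: "f < nf"
    and ff: "(f, f) \<in> B"
begin

lemma finite_batches: "finite B"
  using batches by (rule finite_minibatches)

lemma bl_le_br: "\<forall>b\<in>B. bl s b \<le> br s b"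
  using sizes batches minibatch_bl_le_br by blast

lemma size_f_pos: "0 < s f"
  using sizes f_file by blast

lemma Suc_rpos_f: "Suc (rpos s f) = lpos s f + s f"
  using size_f_pos by (simp add: rpos_def)

lemma lpos_f_le_tape_len: "lpos s f \<le> tape_len s nf"
  using lpos_add_le_tape_len[OF f_file, of s] size_f_pos by linarith

lemma batch_ends_remove_gt: "R \<in> set (batch_ends s (B - {(f, f)}) (lpos s f)) \<Longrightarrow> rpos s f < R"
proof -
  assume "R \<in> set (batch_ends s (B - {(f, f)}) (lpos s f))"
  then obtain b where "b \<in> B" "b \<noteq> (f, f)" "bl s b = lpos s f" "R = br s b"
    using finite_batches by (auto simp: batch_ends_def)
  then obtain x y where b: "(x, y) \<in> B" "(x, y) \<noteq> (f, f)" "lpos s x = lpos s f" "R = rpos s y"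
    by (cases b) (auto simp: bl_def br_def)
  then have xy: "x < nf" "y < nf" "lpos s x \<le> lpos s y"
    using batches by (auto simp: is_minibatch_def)
  have "x = f"
    using b(3) lpos_strict_mono[of x f s] lpos_strict_mono[of f x s] sizes xy(1) f_file
    by (cases x f rule: linorder_cases) auto
  have size_y: "0 < s y"
    using sizes xy(2) by blast
  with xy(3) b(3) have "\<not> y < f"
    using lpos_strict_mono[of y f s] by linarith
  with \<open>x = f\<close> b(2) have f_less: "f < y"
    by (metis linorder_neqE_nat)
  then show "rpos s f < R"
    using rpos_strict_mono[of f y s, OF f_less size_y] b(4) by simp
qed

lemma batch_ends_remove:
  "batch_ends s B (lpos s f) = rpos s f # batch_ends s (B - {(f, f)}) (lpos s f)"
proof -
  let ?X = "br s ` {b \<in> B - {(f, f)}. bl s b = lpos s f}"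
  have fin: "finite ?X"
    using finite_batches by simp
  have gt: "\<forall>R\<in>?X. rpos s f < R"
    using batch_ends_remove_gt fin by (simp add: batch_ends_def)
  have "{b \<in> B. bl s b = lpos s f} = insert (f, f) {b \<in> B - {(f, f)}. bl s b = lpos s f}"
    using ff by (auto simp: bl_def)
  then have "batch_ends s B (lpos s f) = sorted_list_of_set (insert (rpos s f) ?X)"
    by (simp add: batch_ends_def br_def)
  moreover have "rpos s f \<notin> ?X"
    using gt by blast
  then have "sorted_list_of_set (insert (rpos s f) ?X) = insort (rpos s f) (sorted_list_of_set ?X)"
    using fin by (intro sorted_list_of_set_insert) auto
  ultimately have "batch_ends s B (lpos s f) = insort (rpos s f) (sorted_list_of_set ?X)"
    by simp
  also have "\<dots> = rpos s f # sorted_list_of_set ?X"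
    using fin gt by (intro insort_is_Cons) (simp only: set_sorted_list_of_set, blast intro: less_imp_le)
  finally show ?thesis
    by (simp add: batch_ends_def)
qed

lemma sweep_block_remove_self:
  "sweep_block s B (lpos s f) = open_excursion (lpos s f) (rpos s f) @ sweep_block s (B - {(f, f)}) (lpos s f)"
  using Suc_rpos_f size_f_pos
  by (simp add: sweep_block_def batch_ends_remove Cons_excursion)

lemma sweep_remove:
  "sweep s nf B = sweep_above s nf B (lpos s f) @ open_excursion (lpos s f) (rpos s f)
     @ sweep_block s (B - {(f, f)}) (lpos s f) @ sweep_below s B (lpos s f)"
  "sweep s nf (B - {(f, f)}) = sweep_above s nf B (lpos s f)
     @ sweep_block s (B - {(f, f)}) (lpos s f) @ sweep_below s B (lpos s f)"
proof -
  have p: "1 \<le> lpos s f" "lpos s f \<le> tape_len s nf"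
    using lpos_pos[of s f] lpos_f_le_tape_len by linarith+
  have bl_ff: "bl s (f, f) = lpos s f"
    by (simp add: bl_def)
  show "sweep s nf B = sweep_above s nf B (lpos s f) @ open_excursion (lpos s f) (rpos s f)
     @ sweep_block s (B - {(f, f)}) (lpos s f) @ sweep_below s B (lpos s f)"
    using sweep_split[OF p, of B] by (simp add: sweep_block_remove_self)
  show "sweep s nf (B - {(f, f)}) = sweep_above s nf B (lpos s f)
     @ sweep_block s (B - {(f, f)}) (lpos s f) @ sweep_below s B (lpos s f)"
    using sweep_split[OF p, of "B - {(f, f)}"] sweep_above_remove[of s nf B "(f, f)", unfolded bl_ff]
      sweep_below_remove[of s B "(f, f)", unfolded bl_ff]
    by simp
qed

lemma reads_at_remove_cases:
  assumes g: "g < nf" "g \<noteq> f" and read: "reads_at s (trajectory s nf B) g t"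
  shows "g \<in> files_of_set s nf {b \<in> B. lpos s f < bl s b}
           \<and> reads_at s (trajectory s nf (B - {(f, f)})) g t
       \<or> 2 * s f \<le> t \<and> reads_at s (trajectory s nf (B - {(f, f)})) g (t - 2 * s f)"
proof -
  define A where "A = sweep_above s nf B (lpos s f)"
  define E where "E = open_excursion (lpos s f) (rpos s f)"
  define Z where "Z = sweep_block s (B - {(f, f)}) (lpos s f) @ sweep_below s B (lpos s f)
    @ [2..<tape_len s nf + 2]"
  have traj: "trajectory s nf B = A @ E @ Z" "trajectory s nf (B - {(f, f)}) = A @ Z"
    unfolding A_def E_def Z_def by (simp_all add: trajectory_eq_sweep sweep_remove)
  have size_g: "0 < s g"
    using sizes g(1) by blast
  have f_le: "lpos s f \<le> rpos s f"
    using Suc_rpos_f size_f_pos by linarith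
  have E: "E \<noteq> []" "hd E = lpos s f" "last E = Suc (lpos s f)" "length E = 2 * s f"
    unfolding E_def using hd_open_excursion[OF f_le] last_open_excursion[OF f_le]
      length_open_excursion[OF f_le] by (auto simp: Suc_rpos_f open_excursion_def)
  have hd_Z: "hd Z = lpos s f"
    by (simp add: Z_def sweep_block_def)
  have run: "ascending_run (A @ E @ Z) (lpos s g) (s g) t"
    using read by (simp only: traj(1) reads_at_iff_ascending_run)
  have "hd (E @ Z) \<noteq> Suc (last A)" if "A \<noteq> []"
    using set_sweep_above[OF last_in_set[OF that[unfolded A_def]]] E by (simp add: A_def)
  from ascending_run_append_cases[OF run size_g this]
  consider (in_A) "ascending_run A (lpos s g) (s g) t"
    | (after_A) "length A \<le> t" "ascending_run (E @ Z) (lpos s g) (s g) (t - length A)"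
    by blast
  then show ?thesis
  proof cases
    case in_A
    from every_runD[OF every_run_sweep_above[OF finite_batches bl_le_br] in_A[unfolded A_def] size_g]
    obtain b where b: "b \<in> B" "lpos s f < bl s b" "bl s b \<le> lpos s g" "lpos s g + s g \<le> Suc (br s b)"
      by blast
    then have "g \<in> files_of s nf b"
      using g(1) by (simp add: files_of_def rpos_def)
    with b(1,2) have "g \<in> files_of_set s nf {b \<in> B. lpos s f < bl s b}"
      unfolding files_of_set_def by blast
    with in_A show ?thesis
      by (simp add: traj(2) reads_at_iff_ascending_run ascending_run_append_left)
  next
    case after_A
    have "hd Z \<noteq> Suc (last E)"
      using E(3) hd_Z by simp
    from ascending_run_append_cases[OF after_A(2) size_g this]
    consider "ascending_run E (lpos s g) (s g) (t - length A)"
      | "length E \<le> t - length A" "ascending_run Z (lpos s g) (s g) (t - length A - length E)"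
      by blast
    then show ?thesis
    proof cases
      case 1
      from every_runD[OF every_run_open_excursion[OF f_le] 1[unfolded E_def] size_g]
      have "lpos s f \<le> lpos s g" "lpos s g + s g \<le> lpos s f + s f"
        by (simp_all add: Suc_rpos_f)
      with size_g g(2) show ?thesis
        using nested_file_eq by blast
    next
      case 2
      then have "ascending_run (A @ Z) (lpos s g) (s g) (t - 2 * s f)"
        using ascending_run_append_right[OF 2(2), of A] after_A(1) E(4)
        by (simp add: add_diff_inverse_nat)
      moreover have "2 * s f \<le> t"
        using after_A(1) 2(1) E(4) by linarith
      ultimately show ?thesis
        by (simp add: traj(2) reads_at_iff_ascending_run)
    qed
  qed
qed

lemma reads_at_resp_file: "g < nf \<Longrightarrow> reads_at s (trajectory s nf B) g (resp s nf B g)"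
  using reads_at_resp[where s = s] sizes by blast

lemma resp_remove_le:
  assumes "g < nf" "g \<noteq> f"
  shows "resp s nf (B - {(f, f)}) g \<le> resp s nf B g"
  using reads_at_remove_cases[OF assms reads_at_resp_file[OF assms(1)]] sizes assms(1)
  by (auto dest: resp_le)

lemma resp_remove_gain:
  assumes "g < nf" "g \<noteq> f" "g \<notin> files_of_set s nf {b \<in> B. lpos s f < bl s b}"
  shows "resp s nf (B - {(f, f)}) g + 2 * s f \<le> resp s nf B g"
proof -
  have "2 * s f \<le> resp s nf B g"
    and "reads_at s (trajectory s nf (B - {(f, f)})) g (resp s nf B g - 2 * s f)"
    using reads_at_remove_cases[OF assms(1,2) reads_at_resp_file[OF assms(1)]] sizes assms by auto
  then show ?thesis
    using resp_le by fastforce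
qed

lemma length_sweep_above_le_resp: "length (sweep_above s nf B (lpos s f)) \<le> resp s nf B f"
proof (rule ccontr)
  let ?A = "sweep_above s nf B (lpos s f)"
  assume "\<not> length ?A \<le> resp s nf B f"
  moreover have "ascending_run (trajectory s nf B) (lpos s f) (s f) (resp s nf B f)"
    using reads_at_resp_file[OF f_file] by (simp add: reads_at_iff_ascending_run)
  ultimately have "lpos s f \<in> set ?A"
    by (metis trajectory_eq_sweep sweep_remove(1) append.assoc ascending_run_nth nth_append nth_mem not_le)
  then show False
    using set_sweep_above by blast
qed

text \<open>Without \<open>(f, f)\<close>, the file \<open>f\<close> is read by the next excursion from \<open>lpos s f\<close> if there
  is one, and in phase 2 otherwise.\<close>

lemma resp_remove_self_le:
  "resp s nf (B - {(f, f)}) f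
     \<le> length (sweep_above s nf B (lpos s f)) + (lpos s f - 1) + length (sweep_below s B (lpos s f))"
proof (cases "batch_ends s (B - {(f, f)}) (lpos s f)")
  case Nil
  then have "sweep s nf (B - {(f, f)})
      = sweep_above s nf B (lpos s f) @ [lpos s f] @ sweep_below s B (lpos s f)"
    by (simp add: sweep_remove sweep_block_def)
  then show ?thesis
    using resp_le[OF reads_at_phase2[where s = s and B = "B - {(f, f)}", OF f_file size_f_pos]]
    by simp
next
  case (Cons R Rs)
  then have "rpos s f < R"
    using batch_ends_remove_gt by simp
  then have "lpos s f < R + 2"
    using Suc_rpos_f by linarith
  then have "lpos s f # excursion (lpos s f) R = [lpos s f..<R + 2] @ rev [lpos s f..<Suc R]"
    by (simp add: excursion_def upt_conv_Cons del: upt_Suc)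
  then have "trajectory s nf (B - {(f, f)}) = sweep_above s nf B (lpos s f) @ [lpos s f..<R + 2]
      @ rev [lpos s f..<Suc R] @ concat (map (excursion (lpos s f)) Rs) @ sweep_below s B (lpos s f)
      @ [2..<tape_len s nf + 2]"
    using Cons by (simp add: trajectory_eq_sweep sweep_remove sweep_block_def del: upt_Suc)
  moreover have "ascending_run [lpos s f..<R + 2] (lpos s f) (s f) 0"
    using ascending_run_upt[of "lpos s f" "lpos s f" "s f" "R + 2"] \<open>rpos s f < R\<close> Suc_rpos_f
    by simp
  ultimately have "reads_at s (trajectory s nf (B - {(f, f)})) f (length (sweep_above s nf B (lpos s f)))"
    by (metis ascending_run_append_left ascending_run_append_right reads_at_iff_ascending_run add_0_right)
  then show ?thesis
    by (auto dest: resp_le)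
qed

lemma resp_remove_self:
  "resp s nf (B - {(f, f)}) f
     \<le> resp s nf B f + 2 * (lpos s f - 1 + (\<Sum>b\<in>{b \<in> B. bl s b < lpos s f}. bsize s b))"
proof -
  have "resp s nf (B - {(f, f)}) f
      \<le> length (sweep_above s nf B (lpos s f)) + (lpos s f - 1) + length (sweep_below s B (lpos s f))"
    by (rule resp_remove_self_le)
  also have "\<dots> \<le> resp s nf B f + (lpos s f - 1)
      + (lpos s f - 1 + 2 * (\<Sum>b\<in>{b \<in> B. bl s b < lpos s f}. bsize s b))"
    using length_sweep_above_le_resp length_sweep_below_le[OF finite_batches bl_le_br]
    by (intro add_mono) auto
  finally show ?thesis
    by simp
qed

lemma resp_remove_bound:
  assumes "g < nf" "f \<notin> G" "G \<inter> files_of_set s nf {b \<in> B. lpos s f < bl s b} = {}"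
  shows "resp s nf (B - {(f, f)}) g + (if g \<in> G then 2 * s f else 0)
    \<le> resp s nf B g + (if g = f then 2 * (lpos s f - 1 + (\<Sum>b\<in>{b \<in> B. bl s b < lpos s f}. bsize s b)) else 0)"
proof -
  consider "g = f" | "g \<in> G" | "g \<noteq> f" "g \<notin> G"
    by blast
  then show ?thesis
  proof cases
    case 2
    with assms(2,3) have "g \<noteq> f" "g \<notin> files_of_set s nf {b \<in> B. lpos s f < bl s b}"
      by auto
    with 2 show ?thesis
      using resp_remove_gain[OF assms(1)] by simp
  qed (use assms(2) resp_remove_self resp_remove_le[OF assms(1)] in auto)
qed

lemma v_remove_le:
  assumes "finite R" "\<forall>r\<in>R. fo r < nf"
    and G: "G \<subseteq> {..<nf}" "f \<notin> G" "G \<inter> files_of_set s nf {b \<in> B. lpos s f < bl s b} = {}"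
  shows "v s nf R fo (B - {(f, f)}) + 2 * (s f * (\<Sum>g\<in>G. nreq R fo g))
    \<le> v s nf R fo B + 2 * (nreq R fo f * (lpos s f - 1 + (\<Sum>b\<in>{b \<in> B. bl s b < lpos s f}. bsize s b)))"
proof -
  define c where "c = 2 * (lpos s f - 1 + (\<Sum>b\<in>{b \<in> B. bl s b < lpos s f}. bsize s b))"
  let ?n = "nreq R fo"
  have per_file: "?n g * resp s nf (B - {(f, f)}) g + (if g \<in> G then ?n g * (2 * s f) else 0)
      \<le> ?n g * resp s nf B g + (if g = f then ?n g * c else 0)" if "g < nf" for g
    using mult_le_mono2[OF resp_remove_bound[OF that G(2,3)], of "?n g"]
    by (cases "g \<in> G"; cases "g = f") (simp_all add: c_def add_mult_distrib2)
  have v: "v s nf R fo B' = (\<Sum>g<nf. ?n g * resp s nf B' g)" for B'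
    unfolding v_def using assms(1,2) by (intro sum_requests_eq_sum_files) auto
  have "v s nf R fo (B - {(f, f)}) + (\<Sum>g\<in>G. ?n g * (2 * s f))
      = (\<Sum>g<nf. ?n g * resp s nf (B - {(f, f)}) g + (if g \<in> G then ?n g * (2 * s f) else 0))"
    using G(1) by (simp add: v sum.distrib Int_absorb1 flip: sum.inter_restrict)
  also have "\<dots> \<le> (\<Sum>g<nf. ?n g * resp s nf B g + (if g = f then ?n g * c else 0))"
    using per_file by (intro sum_mono) simp
  also have "\<dots> = v s nf R fo B + ?n f * c"
    using f_file by (simp add: v sum.distrib)
  finally have "v s nf R fo (B - {(f, f)}) + (\<Sum>g\<in>G. ?n g * (2 * s f)) \<le> v s nf R fo B + ?n f * c" .
  moreover have "(\<Sum>g\<in>G. ?n g * (2 * s f)) = 2 * (s f * (\<Sum>g\<in>G. ?n g))"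
    by (simp add: sum_distrib_right[symmetric])
  moreover have "?n f * c = 2 * (?n f * (lpos s f - 1 + (\<Sum>b\<in>{b \<in> B. bl s b < lpos s f}. bsize s b)))"
    by (simp add: c_def)
  ultimately show ?thesis
    by (simp only:)
qed

end

theorem corollary4:
  fixes s :: "nat \<Rightarrow> nat" and nf :: nat and R :: "'r set" and fo :: "'r \<Rightarrow> nat"
    and B :: "(nat \<times> nat) set" and f :: nat
  assumes sizes: "\<forall>i<nf. 0 < s i"
    and finR: "finite R"
    and req_files: "\<forall>r\<in>R. fo r < nf"
    and batches: "\<forall>b\<in>B. is_minibatch s nf b"
    and f_file: "f < nf"
    and ff: "(f, f) \<in> B"
    and cond: "nreq R fo f * (lpos s f + (\<Sum>b\<in>{b \<in> B. bl s b < lpos s f}. bsize s b))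
               < s f * ((\<Sum>g\<in>{g. g < nf \<and> lpos s g < lpos s f}. nreq R fo g)
                        + (\<Sum>g\<in>{g. g < nf \<and> g \<notin> files_of_set s nf B \<and> lpos s f < lpos s g}. nreq R fo g))"
  shows "v s nf R fo (B - {(f, f)}) < v s nf R fo B"
proof -
  interpret singleton_batch s nf B f
    using sizes batches f_file ff by unfold_locales
  define S where "S = (\<Sum>b\<in>{b \<in> B. bl s b < lpos s f}. bsize s b)"
  define G1 where "G1 = {g. g < nf \<and> lpos s g < lpos s f}"
  define G2 where "G2 = {g. g < nf \<and> g \<notin> files_of_set s nf B \<and> lpos s f < lpos s g}"
  have "G1 \<union> G2 \<subseteq> {..<nf}" "f \<notin> G1 \<union> G2"
    by (auto simp: G1_def G2_def)
  moreover have "(G1 \<union> G2) \<inter> files_of_set s nf {b \<in> B. lpos s f < bl s b} = {}"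
    by (auto simp: G1_def G2_def files_of_set_def files_of_def)
  moreover have "(\<Sum>g\<in>G1 \<union> G2. nreq R fo g) = (\<Sum>g\<in>G1. nreq R fo g) + (\<Sum>g\<in>G2. nreq R fo g)"
    by (rule sum.union_disjoint) (auto simp: G1_def G2_def)
  ultimately have "v s nf R fo (B - {(f, f)}) + 2 * (s f * ((\<Sum>g\<in>G1. nreq R fo g) + (\<Sum>g\<in>G2. nreq R fo g)))
      \<le> v s nf R fo B + 2 * (nreq R fo f * (lpos s f - 1 + S))"
    using v_remove_le[OF finR req_files, of "G1 \<union> G2"] unfolding S_def by simp
  moreover have "nreq R fo f * (lpos s f - 1 + S) \<le> nreq R fo f * (lpos s f + S)"
    by simp
  ultimately show ?thesis
    using cond unfolding S_def[symmetric] G1_def[symmetric] G2_def[symmetric] by linarith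
qed

end
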